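(* Modularity is not local. That is, there exist graphs $G_1=(V_1,E_1)$ and $G_2=(V_2,E_2)$, a set $V_a\subseteq V_1\cap V_2$ such that $G_1$ and $G_2$ agree on $V_a$ and on the neighborhood of $V_a$, clusterings $C_a,D_a$ of $V_a$, a clustering $C_1$ of $V_1\setminus V_a$ and a clustering $C_2$ of $V_2\setminus V_a$, such that $Q_{\mathrm{mod}}(G_1,C_a\cup C_1)\ge Q_{\mathrm{mod}}(G_1,D_a\cup C_1)$ but $Q_{\mathrm{mod}}(G_2,C_a\cup C_2)< Q_{\mathrm{mod}}(G_2,D_a\cup C_2)$.
   Context: A (symmetric weighted) graph is a pair $G=(V,E)$ of a finite set $V$ and a function $E:V\times V\to\mathbb{R}_{\ge 0}$ with $E(i,j)=E(j,i)$; self loops are allowed. A clustering of $G$ is a partition of $V$ into nonempty pairwise disjoint sets (clusters); a clustering of the empty set is the empty collection. For $c\subseteq V$ let $v_c=\sum_{i\in c}\sum_{j\in V}E(i,j)$ (volume) and $w_c=\sum_{i,j\in c}E(i,j)$ (within weight). Modularity: $Q_{\mathrm{mod}}(G,C)=\sum_{c\in C}\left(\frac{w_c}{v_V}-\left(\frac{v_c}{v_V}\right)^2\right)$ (defined when $v_V>0$). Graphs $G_1=(V_1,E_1)$, $G_2=(V_2,E_2)$ agree on $V_a\subseteq V_1\cap V_2$ and its neighborhood if $E_1(i,j)=E_2(i,j)$ for all $i\in V_a$, $j\in V_1\cap V_2$; $E_1(i,j)=0$ for all $i\in V_a$, $j\in V_1\setminus V_2$; and $E_2(i,j)=0$ for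 all $i\in V_a$, $j\in V_2\setminus V_1$. A quality function $Q$ is local if for all such $G_1,G_2,V_a$ and all clusterings $C_a,D_a$ of $V_a$, $C_1$ of $V_1\setminus V_a$, $C_2$ of $V_2\setminus V_a$, $Q(G_1,C_a\cup C_1)\ge Q(G_1,D_a\cup C_1)$ implies $Q(G_2,C_a\cup C_2)\ge Q(G_2,D_a\cup C_2)$. *)

theory Defs
  imports Main "HOL-Library.Disjoint_Sets" Complex_Main
begin

text \<open>A symmetric weighted graph: a finite vertex set V and weights E on V x V
  (values of E outside V x V are irrelevant and never consulted).\<close>
definition is_graph :: "'a set \<Rightarrow> ('a \<Rightarrow> 'a \<Rightarrow> real) \<Rightarrow> bool" where
  "is_graph V E \<longleftrightarrow> finite V \<and> (\<forall>i\<in>V. \<forall>j\<in>V. E i j \<ge> 0 \<and> E i j = E j i)"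

definition is_clustering :: "'a set set \<Rightarrow> 'a set \<Rightarrow> bool" where
  "is_clustering C V \<longleftrightarrow> (\<forall>c\<in>C. c \<noteq> {}) \<and> disjoint C \<and> \<Union>C = V"

definition volume :: "'a set \<Rightarrow> ('a \<Rightarrow> 'a \<Rightarrow> real) \<Rightarrow> 'a set \<Rightarrow> real" where
  "volume V E c = (\<Sum>i\<in>c. \<Sum>j\<in>V. E i j)"

definition within_weight :: "('a \<Rightarrow> 'a \<Rightarrow> real) \<Rightarrow> 'a set \<Rightarrow> real" where
  "within_weight E c = (\<Sum>i\<in>c. \<Sum>j\<in>c. E i j)"

definition modularity :: "'a set \<Rightarrow> ('a \<Rightarrow> 'a \<Rightarrow> real) \<Rightarrow> 'a set set \<Rightarrow> real" where
  "modularity V E C = (\<Sum>c\<in>C. within_weight E c / volume V E V - (volume V E c / volume V E V)^2)"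

definition agree_on_nbhd ::
  "'a set \<Rightarrow> ('a \<Rightarrow> 'a \<Rightarrow> real) \<Rightarrow> 'a set \<Rightarrow> ('a \<Rightarrow> 'a \<Rightarrow> real) \<Rightarrow> 'a set \<Rightarrow> bool" where
  "agree_on_nbhd V1 E1 V2 E2 Va \<longleftrightarrow>
     Va \<subseteq> V1 \<inter> V2 \<and>
     (\<forall>i\<in>Va. \<forall>j\<in>V1 \<inter> V2. E1 i j = E2 i j) \<and>
     (\<forall>i\<in>Va. \<forall>j\<in>V1 - V2. E1 i j = 0) \<and>
     (\<forall>i\<in>Va. \<forall>j\<in>V2 - V1. E2 i j = 0)"

end

theory Submission
  imports Defs
begin

text \<open>Putting two vertices \<open>a\<close>, \<open>b\<close> into one cluster instead of two singletons changes the
  modularity by \<open>(E a b + E b a) / v - 2 v\<^sub>a v\<^sub>b / v\<^sup>2\<close>. Its sign depends on the total volume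
  \<open>v\<close>, a global quantity: adding a heavy edge far away from \<open>a\<close> and \<open>b\<close> raises \<open>v\<close> without
  changing anything near them, and turns a loss into a gain.\<close>

lemma modularity_merge_singletons:
  assumes "a \<noteq> b" "finite C" "{a,b} \<notin> C" "{a} \<notin> C" "{b} \<notin> C"
  shows "modularity V E ({{a,b}} \<union> C) - modularity V E ({{a},{b}} \<union> C) =
    (E a b + E b a) / volume V E V - 2 * volume V E {a} * volume V E {b} / (volume V E V)\<^sup>2"
proof -
  have "{a} \<noteq> {b}" using assms(1) by simp
  moreover have "within_weight E {a,b} = E a a + E a b + E b a + E b b"
    and "volume V E {a,b} = volume V E {a} + volume V E {b}"
    using assms(1) by (simp_all add: within_weight_def volume_def)
  moreover have "within_weight E {x} = E x x" for x
    by (simp add: within_weight_def)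
  ultimately show ?thesis
    using assms by (simp add: modularity_def diff_divide_distrib add_divide_distrib power2_eq_square
        algebra_simps)
qed

lemma modularity_merge_singletons_ge_iff:
  assumes "a \<noteq> b" "finite C" "{a,b} \<notin> C" "{a} \<notin> C" "{b} \<notin> C" "volume V E V > 0"
  shows "modularity V E ({{a},{b}} \<union> C) \<le> modularity V E ({{a,b}} \<union> C) \<longleftrightarrow>
    2 * volume V E {a} * volume V E {b} \<le> (E a b + E b a) * volume V E V"
proof -
  let ?v = "volume V E V"
  have "modularity V E ({{a,b}} \<union> C) - modularity V E ({{a},{b}} \<union> C) =
      (E a b + E b a) / ?v - 2 * volume V E {a} * volume V E {b} / ?v\<^sup>2"
    by (rule modularity_merge_singletons[OF assms(1-5)])
  also have "\<dots> = ((E a b + E b a) * ?v - 2 * volume V E {a} * volume V E {b}) / ?v\<^sup>2"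
    using assms(6) by (simp add: field_simps power2_eq_square)
  finally have "0 \<le> modularity V E ({{a,b}} \<union> C) - modularity V E ({{a},{b}} \<union> C) \<longleftrightarrow>
      0 \<le> (E a b + E b a) * ?v - 2 * volume V E {a} * volume V E {b}"
    using assms(6) by (simp add: zero_le_divide_iff)
  then show ?thesis
    by simp
qed

lemma agree_on_nbhd_subgraph:
  assumes "V2 \<subseteq> V1" "Va \<subseteq> V2" "\<forall>i\<in>Va. \<forall>j\<in>V1 - V2. E i j = 0"
  shows "agree_on_nbhd V1 E V2 E Va"
  using assms unfolding agree_on_nbhd_def by blast

definition example_weight :: "nat \<Rightarrow> nat \<Rightarrow> real" where
  "example_weight i j =
    (if {i,j} = {0,1} then 1 else if {i,j} = {0,2} \<or> {i,j} = {1,2} then 3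
     else if {i,j} = {3,4} then 10 else 0)"

lemma is_graph_example_weight: "finite V \<Longrightarrow> is_graph V example_weight"
  unfolding is_graph_def example_weight_def by (simp add: insert_commute)

theorem theorem2:
  shows "\<exists>(V1::nat set) E1 (V2::nat set) E2 Va Ca Da C1 C2.
    is_graph V1 E1 \<and> is_graph V2 E2 \<and>
    volume V1 E1 V1 > 0 \<and> volume V2 E2 V2 > 0 \<and>
    agree_on_nbhd V1 E1 V2 E2 Va \<and>
    is_clustering Ca Va \<and> is_clustering Da Va \<and>
    is_clustering C1 (V1 - Va) \<and> is_clustering C2 (V2 - Va) \<and>
    modularity V1 E1 (Ca \<union> C1) \<ge> modularity V1 E1 (Da \<union> C1) \<and>
    modularity V2 E2 (Ca \<union> C2) < modularity V2 E2 (Da \<union> C2)"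
proof -
  let ?E = example_weight and ?V1 = "{0,1,2,3,4::nat}" and ?V2 = "{0,1,2::nat}"
  have vol: "volume ?V1 ?E ?V1 = 34" "volume ?V2 ?E ?V2 = 14"
    "volume ?V1 ?E {0} = 4" "volume ?V1 ?E {1} = 4" "volume ?V2 ?E {0} = 4" "volume ?V2 ?E {1} = 4"
    by (simp_all add: volume_def example_weight_def doubleton_eq_iff)
  have weight_01: "?E 0 1 = 1" "?E 1 0 = 1"
    by (simp_all add: example_weight_def doubleton_eq_iff)
  txt \<open>With \<open>v\<^sub>0 = v\<^sub>1 = 4\<close> and \<open>E 0 1 = 1\<close>, merging \<open>0\<close> and \<open>1\<close> pays off iff the total volume is
    at least 16.\<close>
  have "modularity ?V1 ?E ({{0},{1}} \<union> {{2},{3,4}}) \<le> modularity ?V1 ?E ({{0,1}} \<union> {{2},{3,4}})"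
    by (subst modularity_merge_singletons_ge_iff, unfold vol weight_01) (auto simp: doubleton_eq_iff)
  moreover have "modularity ?V2 ?E ({{0,1}} \<union> {{2}}) < modularity ?V2 ?E ({{0},{1}} \<union> {{2}})"
    unfolding not_le[symmetric]
    by (subst modularity_merge_singletons_ge_iff, unfold vol weight_01) (auto simp: doubleton_eq_iff)
  moreover have "agree_on_nbhd ?V1 ?E ?V2 ?E {0,1}"
    by (rule agree_on_nbhd_subgraph) (auto simp: example_weight_def doubleton_eq_iff)
  moreover have "is_clustering {{0,1}} {0,1::nat}" "is_clustering {{0},{1}} {0,1::nat}"
    "is_clustering {{2},{3,4}} (?V1 - {0,1})" "is_clustering {{2}} (?V2 - {0,1})"
    unfolding is_clustering_def disjoint_def by auto
  moreover have "is_graph ?V1 ?E" "is_graph ?V2 ?E"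
    by (simp_all add: is_graph_example_weight)
  moreover have "volume ?V1 ?E ?V1 > 0" "volume ?V2 ?E ?V2 > 0"
    unfolding vol by simp_all
  ultimately show ?thesis
    by blast
qed

end
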